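(* Let $(\mathcal{S},\mathcal{A},P,R,d_0,\gamma)$ be a finite Markov decision process with bounded reward and discount $\gamma\in[0,1)$, $\pi$ a policy, and $\lambda\in[0,1]$, and assume the Markov chain on states induced by $\pi$ is ergodic, with stationary distribution $d^\pi$. Let $\overleftarrow{G}_t=\sum_{i=1}^t(\lambda\gamma)^iR_{t-i}$. Then the limit $\lim_{t\to\infty}\mathbb{E}[\overleftarrow{G}_t\mid S_t=s]=: \overleftarrow{v}^\pi(s)$ exists, and the operator $\overleftarrow{\mathcal{T}}$ on functions $v:\mathcal{S}\to\mathbb{R}$ defined by $$(\overleftarrow{\mathcal{T}}v)(s)=\lambda\gamma\,\overleftarrow{r}^\pi(s)+\lambda\gamma\sum_{s'}\overleftarrow{P}^\pi(s'\mid s)\,v(s')$$ is a contraction mapping (in the sup norm); hence repeatedly applying it converges to $\overleftarrow{v}^\pi$.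
   Context: Trajectories: $S_0\sim d_0$, $A_t\sim\pi(\cdot\mid S_t)$, $S_{t+1}\sim P(\cdot\mid S_t,A_t)$, $R_t=R(S_t,A_t)$. Let $\overrightarrow{P}^\pi(s'\mid s)=\sum_a\pi(a\mid s)P(s'\mid s,a)$. The backward transition kernel is $\overleftarrow{P}^\pi(s'\mid s)=d^\pi(s)^{-1}d^\pi(s')\overrightarrow{P}^\pi(s\mid s')$ (probability that the previous state was $s'$ given the current state $s$), and the backward reward is $\overleftarrow{r}^\pi(s)=\sum_{s',a'}P(s\mid s',a')d^\pi(s')\pi(a'\mid s')d^\pi(s)^{-1}R(s',a')$ (expected reward received upon entering $s$). *)

theory Defs
  imports Complex_Main
begin

text \<open>Finite MDP: states of finite type 's, actions of finite type 'a.
  P s a s' = transition probability, pol s a = policy probability, R s a = reward.\<close>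

definition is_mdp :: "('s::finite \<Rightarrow> 'a::finite \<Rightarrow> 's \<Rightarrow> real) \<Rightarrow> ('s \<Rightarrow> real) \<Rightarrow> bool" where
  "is_mdp P d0 \<longleftrightarrow> (\<forall>s a s'. 0 \<le> P s a s') \<and> (\<forall>s a. (\<Sum>s'\<in>UNIV. P s a s') = 1)
     \<and> (\<forall>s. 0 \<le> d0 s) \<and> (\<Sum>s\<in>UNIV. d0 s) = 1"

definition is_policy :: "('s::finite \<Rightarrow> 'a::finite \<Rightarrow> real) \<Rightarrow> bool" where
  "is_policy pol \<longleftrightarrow> (\<forall>s a. 0 \<le> pol s a) \<and> (\<forall>s. (\<Sum>a\<in>UNIV. pol s a) = 1)"

definition Pfwd :: "('s::finite \<Rightarrow> 'a::finite \<Rightarrow> 's \<Rightarrow> real) \<Rightarrow> ('s \<Rightarrow> 'a \<Rightarrow> real) \<Rightarrow> 's \<Rightarrow> 's \<Rightarrow> real" where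
  "Pfwd P pol s s' = (\<Sum>a\<in>UNIV. pol s a * P s a s')"

fun Ppow :: "('s::finite \<Rightarrow> 's \<Rightarrow> real) \<Rightarrow> nat \<Rightarrow> 's \<Rightarrow> 's \<Rightarrow> real" where
  "Ppow Q 0 s s' = (if s = s' then 1 else 0)"
| "Ppow Q (Suc n) s s' = (\<Sum>u\<in>UNIV. Ppow Q n s u * Q u s')"

definition irreducible_chain :: "('s::finite \<Rightarrow> 's \<Rightarrow> real) \<Rightarrow> bool" where
  "irreducible_chain Q \<longleftrightarrow> (\<forall>s s'. \<exists>n. Ppow Q n s s' > 0)"

definition aperiodic_chain :: "('s::finite \<Rightarrow> 's \<Rightarrow> real) \<Rightarrow> bool" where
  "aperiodic_chain Q \<longleftrightarrow> (\<forall>s. Gcd {n::nat. n > 0 \<and> Ppow Q n s s > 0} = 1)"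

definition ergodic_chain :: "('s::finite \<Rightarrow> 's \<Rightarrow> real) \<Rightarrow> bool" where
  "ergodic_chain Q \<longleftrightarrow> irreducible_chain Q \<and> aperiodic_chain Q"

definition stationary_dist :: "('s::finite \<Rightarrow> 's \<Rightarrow> real) \<Rightarrow> ('s \<Rightarrow> real) \<Rightarrow> bool" where
  "stationary_dist Q d \<longleftrightarrow> (\<forall>s. 0 \<le> d s) \<and> (\<Sum>s\<in>UNIV. d s) = 1
     \<and> (\<forall>s. d s = (\<Sum>s'\<in>UNIV. d s' * Q s' s))"

definition state_prob :: "('s::finite \<Rightarrow> 'a::finite \<Rightarrow> 's \<Rightarrow> real) \<Rightarrow> ('s \<Rightarrow> 'a \<Rightarrow> real) \<Rightarrow> ('s \<Rightarrow> real)
    \<Rightarrow> nat \<Rightarrow> 's \<Rightarrow> real" where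
  "state_prob P pol d0 t s = (\<Sum>s0\<in>UNIV. d0 s0 * Ppow (Pfwd P pol) t s0 s)"

text \<open>E[R_j * 1{S_(j+k+1) = s}]: reward at time j jointly with the state k+1 steps later.\<close>
definition reward_joint :: "('s::finite \<Rightarrow> 'a::finite \<Rightarrow> 's \<Rightarrow> real) \<Rightarrow> ('s \<Rightarrow> 'a \<Rightarrow> real) \<Rightarrow> ('s \<Rightarrow> real)
    \<Rightarrow> ('s \<Rightarrow> 'a \<Rightarrow> real) \<Rightarrow> nat \<Rightarrow> nat \<Rightarrow> 's \<Rightarrow> real" where
  "reward_joint P pol d0 R j k s =
     (\<Sum>s'\<in>UNIV. \<Sum>a\<in>UNIV. \<Sum>s''\<in>UNIV.
        state_prob P pol d0 j s' * pol s' a * R s' a * P s' a s'' * Ppow (Pfwd P pol) k s'' s)"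

text \<open>E[ backward return G_t | S_t = s ] with G_t = sum_{i=1..t} (lambda gamma)^i R_(t-i).
  (Division by zero yields 0 in HOL; under ergodicity Pr(S_t = s) > 0 eventually.)\<close>
definition back_cond_return :: "('s::finite \<Rightarrow> 'a::finite \<Rightarrow> 's \<Rightarrow> real) \<Rightarrow> ('s \<Rightarrow> 'a \<Rightarrow> real) \<Rightarrow> ('s \<Rightarrow> real)
    \<Rightarrow> ('s \<Rightarrow> 'a \<Rightarrow> real) \<Rightarrow> real \<Rightarrow> real \<Rightarrow> nat \<Rightarrow> 's \<Rightarrow> real" where
  "back_cond_return P pol d0 R \<gamma> lam t s =
     (\<Sum>i\<in>{1..t}. (lam * \<gamma>) ^ i * reward_joint P pol d0 R (t - i) (i - 1) s) / state_prob P pol d0 t s"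

definition Pback :: "('s::finite \<Rightarrow> 'a::finite \<Rightarrow> 's \<Rightarrow> real) \<Rightarrow> ('s \<Rightarrow> 'a \<Rightarrow> real) \<Rightarrow> ('s \<Rightarrow> real)
    \<Rightarrow> 's \<Rightarrow> 's \<Rightarrow> real" where
  "Pback P pol d s s' = d s' * Pfwd P pol s' s / d s"

definition rback :: "('s::finite \<Rightarrow> 'a::finite \<Rightarrow> 's \<Rightarrow> real) \<Rightarrow> ('s \<Rightarrow> 'a \<Rightarrow> real) \<Rightarrow> ('s \<Rightarrow> real)
    \<Rightarrow> ('s \<Rightarrow> 'a \<Rightarrow> real) \<Rightarrow> 's \<Rightarrow> real" where
  "rback P pol d R s = (\<Sum>s'\<in>UNIV. \<Sum>a'\<in>UNIV. P s' a' s * d s' * pol s' a' * R s' a') / d s"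

definition Tback :: "('s::finite \<Rightarrow> 'a::finite \<Rightarrow> 's \<Rightarrow> real) \<Rightarrow> ('s \<Rightarrow> 'a \<Rightarrow> real) \<Rightarrow> ('s \<Rightarrow> real)
    \<Rightarrow> ('s \<Rightarrow> 'a \<Rightarrow> real) \<Rightarrow> real \<Rightarrow> real \<Rightarrow> ('s \<Rightarrow> real) \<Rightarrow> 's \<Rightarrow> real" where
  "Tback P pol d R \<gamma> lam v s =
     lam * \<gamma> * rback P pol d R s + lam * \<gamma> * (\<Sum>s'\<in>UNIV. Pback P pol d s s' * v s')"

definition supnorm :: "('s::finite \<Rightarrow> real) \<Rightarrow> real" where
  "supnorm v = Max (range (\<lambda>s. \<bar>v s\<bar>))"

end

theory Submission
  imports Defs
begin

text \<open>Ergodicity makes some power of the forward kernel \<open>Q\<close> strictly positive, so Doeblin's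
  argument shows that the state distribution converges to \<open>d\<close>. The numerator
  \<open>u\<^sub>t(s) = E[G\<^sub>t; S\<^sub>t = s]\<close> obeys the affine recursion
  \<open>u\<^bsub>t+1\<^esub> = \<lambda>\<gamma> r\<^sub>t + \<lambda>\<gamma> u\<^sub>t Q\<close>, where \<open>r\<^sub>t\<close> is the expected reward collected on
  entering a state and converges along with the state distribution; since \<open>\<lambda>\<gamma> < 1\<close> the recursion forgets its
  start, so \<open>u\<^sub>t\<close> tends to the solution of \<open>u = \<lambda>\<gamma> r + \<lambda>\<gamma> u Q\<close>. That solution is \<open>d\<close> times the
  fixed point of the backward operator, which is a \<open>\<lambda>\<gamma>\<close>-contraction in the sup norm because the
  backward kernel is stochastic; dividing by \<open>Pr(S\<^sub>t = s) \<longrightarrow> d s > 0\<close> gives the limit.\<close>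

section \<open>Stochastic matrices\<close>

definition stochastic_matrix :: "('s::finite \<Rightarrow> 's \<Rightarrow> real) \<Rightarrow> bool" where
  "stochastic_matrix Q \<longleftrightarrow> (\<forall>s s'. 0 \<le> Q s s') \<and> (\<forall>s. (\<Sum>s'\<in>UNIV. Q s s') = 1)"

definition vmult :: "('s::finite \<Rightarrow> real) \<Rightarrow> ('s \<Rightarrow> 's \<Rightarrow> real) \<Rightarrow> 's \<Rightarrow> real" where
  "vmult \<mu> Q s = (\<Sum>s'\<in>UNIV. \<mu> s' * Q s' s)"

definition l1norm :: "('s::finite \<Rightarrow> real) \<Rightarrow> real" where
  "l1norm \<mu> = (\<Sum>s\<in>UNIV. \<bar>\<mu> s\<bar>)"

lemma abs_le_l1norm: "\<bar>\<mu> s\<bar> \<le> l1norm \<mu>"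
  unfolding l1norm_def by (rule member_le_sum) auto

lemma l1norm_nonneg: "0 \<le> l1norm \<mu>"
  unfolding l1norm_def by (simp add: sum_nonneg)

lemma tendsto_l1norm_0D:
  "(\<lambda>n. l1norm (f n)) \<longlonglongrightarrow> 0 \<Longrightarrow> (\<lambda>n. f n s) \<longlonglongrightarrow> 0"
  by (erule tendsto_0_le[where K = 1]) (simp add: l1norm_nonneg abs_le_l1norm)

lemma tendsto_l1norm_0I:
  "(\<And>s. (\<lambda>n. f n s) \<longlonglongrightarrow> 0) \<Longrightarrow> (\<lambda>n. l1norm (f n)) \<longlonglongrightarrow> 0"
  unfolding l1norm_def using tendsto_sum[of UNIV "\<lambda>s n. \<bar>f n s\<bar>" "\<lambda>_. 0"]
  by (simp add: tendsto_rabs_zero)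

lemma vmult_assoc: "vmult (vmult \<mu> K) L = vmult \<mu> (\<lambda>s. vmult (K s) L)"
  unfolding vmult_def
  by (intro ext) (simp add: sum_distrib_left sum_distrib_right mult.assoc, rule sum.swap)

lemma sum_vmult: "(\<Sum>s\<in>UNIV. vmult \<mu> Q s) = (\<Sum>s'\<in>UNIV. \<mu> s' * (\<Sum>s\<in>UNIV. Q s' s))"
  unfolding vmult_def by (simp add: sum_distrib_left) (rule sum.swap)

lemma sum_vmult_stochastic:
  assumes "stochastic_matrix Q"
  shows "(\<Sum>s\<in>UNIV. vmult \<mu> Q s) = (\<Sum>s\<in>UNIV. \<mu> s)"
  using assms by (simp add: sum_vmult stochastic_matrix_def)

lemma vmult_diff: "vmult (\<lambda>s. \<mu> s - \<nu> s) Q = (\<lambda>s. vmult \<mu> Q s - vmult \<nu> Q s)"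
  unfolding vmult_def by (simp add: fun_eq_iff left_diff_distrib sum_subtractf)

lemma l1norm_vmult_le_vmult_abs:
  assumes "\<And>s s'. 0 \<le> K s s'"
  shows "l1norm (vmult \<mu> K) \<le> (\<Sum>s\<in>UNIV. vmult (\<lambda>s. \<bar>\<mu> s\<bar>) K s)"
  unfolding l1norm_def vmult_def
  by (intro sum_mono order.trans[OF sum_abs]) (simp add: abs_mult assms)

lemma l1norm_vmult_le:
  assumes "stochastic_matrix Q"
  shows "l1norm (vmult \<mu> Q) \<le> l1norm \<mu>"
proof -
  have "l1norm (vmult \<mu> Q) \<le> (\<Sum>s\<in>UNIV. vmult (\<lambda>s. \<bar>\<mu> s\<bar>) Q s)"
    using assms by (intro l1norm_vmult_le_vmult_abs) (simp add: stochastic_matrix_def)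
  also have "\<dots> = l1norm \<mu>" by (simp add: sum_vmult_stochastic assms l1norm_def)
  finally show ?thesis .
qed

text \<open>Doeblin's argument: since \<open>\<mu>\<close> has total mass \<open>0\<close>, the uniform part \<open>\<delta>\<close> of every row of
  \<open>K\<close> contributes nothing to \<open>\<mu> K\<close>.\<close>
lemma l1norm_vmult_le_Doeblin:
  fixes K :: "'s::finite \<Rightarrow> 's \<Rightarrow> real"
  assumes minor: "\<And>s s'. \<delta> \<le> K s s'" and rows: "\<And>s. (\<Sum>s'\<in>UNIV. K s s') = 1"
    and mass0: "(\<Sum>s\<in>UNIV. \<mu> s) = 0"
  shows "l1norm (vmult \<mu> K) \<le> (1 - real (card (UNIV :: 's set)) * \<delta>) * l1norm \<mu>"
proof -
  have "vmult \<mu> K s = vmult \<mu> (\<lambda>s s'. K s s' - \<delta>) s" for s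
    using mass0 by (simp add: vmult_def algebra_simps sum_subtractf flip: sum_distrib_left)
  then have "l1norm (vmult \<mu> K) = l1norm (vmult \<mu> (\<lambda>s s'. K s s' - \<delta>))"
    by (simp add: l1norm_def)
  also have "\<dots> \<le> (\<Sum>s\<in>UNIV. vmult (\<lambda>s. \<bar>\<mu> s\<bar>) (\<lambda>s s'. K s s' - \<delta>) s)"
    using minor by (intro l1norm_vmult_le_vmult_abs) simp
  also have "\<dots> = (\<Sum>s\<in>UNIV. \<bar>\<mu> s\<bar> * (1 - real (card (UNIV :: 's set)) * \<delta>))"
    by (simp add: sum_vmult sum_subtractf rows)
  also have "\<dots> = (1 - real (card (UNIV :: 's set)) * \<delta>) * l1norm \<mu>"
    unfolding l1norm_def sum_distrib_left by (simp add: mult.commute)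
  finally show ?thesis .
qed

lemma Ppow_Suc_vmult: "Ppow Q (Suc n) = (\<lambda>s. vmult (Ppow Q n s) Q)"
  by (simp add: vmult_def fun_eq_iff)

lemma vmult_Ppow_0: "vmult \<mu> (Ppow Q 0) = \<mu>"
  by (simp add: vmult_def fun_eq_iff if_distrib cong: if_cong)

lemma Ppow_add: "Ppow Q (m + n) s = vmult (Ppow Q m s) (Ppow Q n)"
  by (induction n)
    (simp_all only: add_0_right vmult_Ppow_0 add_Suc_right Ppow_Suc_vmult vmult_assoc)

lemma vmult_iterate_Ppow:
  assumes "\<And>t. p (Suc t) = vmult (p t) Q"
  shows "p (t + n) = vmult (p t) (Ppow Q n)"
  by (induction n)
    (simp_all only: add_0_right vmult_Ppow_0 add_Suc_right assms Ppow_Suc_vmult vmult_assoc)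

lemma stochastic_matrix_Ppow:
  assumes "stochastic_matrix Q"
  shows "stochastic_matrix (Ppow Q n)"
proof (induction n)
  case 0
  show ?case by (simp add: stochastic_matrix_def)
next
  case (Suc n)
  then show ?case using assms unfolding stochastic_matrix_def Ppow_Suc_vmult
    by (simp add: sum_vmult) (auto simp: vmult_def intro!: sum_nonneg)
qed

lemma Ppow_nonneg: "stochastic_matrix Q \<Longrightarrow> 0 \<le> Ppow Q n s s'"
  using stochastic_matrix_Ppow by (auto simp: stochastic_matrix_def)

lemma Ppow_mult_le_Ppow_add:
  assumes "stochastic_matrix Q"
  shows "Ppow Q m s u * Ppow Q n u s' \<le> Ppow Q (m + n) s s'"
  unfolding Ppow_add vmult_def using assms
  by (intro member_le_sum[where f = "\<lambda>u. Ppow Q m s u * Ppow Q n u s'"]) (simp_all add: Ppow_nonneg)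

section \<open>Additively closed sets of naturals with gcd 1\<close>

lemma add_closed_mult_mem:
  assumes "\<forall>a\<in>A. \<forall>b\<in>A. a + b \<in> A" and "a \<in> A"
  shows "Suc k * a \<in> A"
  using assms by (induction k) auto

lemma add_closed_Gcd_1_consecutive:
  fixes A :: "nat set"
  assumes closed: "\<forall>a\<in>A. \<forall>b\<in>A. a + b \<in> A" and gcd: "Gcd A = 1" and "0 \<notin> A"
  shows "\<exists>b\<in>A. Suc b \<in> A"
proof -
  define D where "D = {e. 0 < e \<and> (\<exists>b\<in>A. b + e \<in> A)}"
  have "A \<noteq> {}" using gcd by auto
  then obtain a where "a \<in> A" by blast
  with \<open>0 \<notin> A\<close> have "0 < a" by (cases a) auto
  moreover have "a + a \<in> A" using closed \<open>a \<in> A\<close> by blast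
  ultimately have "a \<in> D" unfolding D_def using \<open>a \<in> A\<close> by blast
  define e where "e = (LEAST e. e \<in> D)"
  have "e \<in> D" unfolding e_def using \<open>a \<in> D\<close> by (rule LeastI)
  then obtain b where b: "b \<in> A" "b + e \<in> A" and "0 < e" unfolding D_def by blast
  have "e = 1"
  proof (rule ccontr)
    assume "e \<noteq> 1"
    then obtain c where c: "c \<in> A" "\<not> e dvd c"
      using Gcd_greatest[of A e] gcd by auto
    define k where "k = c div e"
    define r where "r = c mod e"
    have "c = k * e + r" "0 < r" "r < e"
      using c \<open>0 < e\<close> by (auto simp: k_def r_def mod_greater_zero_iff_not_dvd)
    \<comment> \<open>The elements \<open>Suc k * b + c\<close> and \<open>Suc k * (b + e)\<close> of \<open>A\<close> differ by \<open>e - r < e\<close>.\<close>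
    then have "Suc k * b + c + (e - r) = Suc k * (b + e)" by (simp add: algebra_simps)
    moreover have "Suc k * b + c \<in> A"
      using closed add_closed_mult_mem[OF closed b(1)] c(1) by blast
    moreover have "Suc k * (b + e) \<in> A" by (rule add_closed_mult_mem[OF closed b(2)])
    ultimately have "e - r \<in> D"
      using \<open>r < e\<close> unfolding D_def by force
    then have "e \<le> e - r" unfolding e_def by (rule Least_le)
    with \<open>0 < r\<close> \<open>r < e\<close> show False by linarith
  qed
  with b show ?thesis by auto
qed

lemma add_closed_consecutive_ge:
  fixes A :: "nat set"
  assumes closed: "\<forall>a\<in>A. \<forall>b\<in>A. a + b \<in> A" and b: "b \<in> A" "Suc b \<in> A" "0 < b"
    and "b * b \<le> n"
  shows "n \<in> A"
proof -
  define q where "q = n div b"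
  define r where "r = n mod b"
  have n: "n = q * b + r" and "r < b" using b by (auto simp: q_def r_def)
  have "b \<le> q"
  proof (rule ccontr)
    assume "\<not> b \<le> q"
    then have "(q + 1) * b \<le> b * b" by (intro mult_right_mono) auto
    with n \<open>r < b\<close> \<open>b * b \<le> n\<close> show False by (simp add: algebra_simps)
  qed
  with \<open>r < b\<close> obtain m where "q = Suc (r + m)"
    using less_imp_Suc_add[of r q] by auto
  then have n_eq: "n = Suc m * b + r * Suc b" using n by (simp add: algebra_simps)
  have mb: "Suc m * b \<in> A" by (rule add_closed_mult_mem[OF closed b(1)])
  show ?thesis
  proof (cases r)
    case 0
    with mb n_eq show ?thesis by simp
  next
    case (Suc r')
    then have "r * Suc b \<in> A"
      using add_closed_mult_mem[OF closed b(2), of r'] by (simp add: mult.commute)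
    with mb n_eq closed show ?thesis by blast
  qed
qed

lemma add_closed_Gcd_1_eventually_mem:
  fixes A :: "nat set"
  assumes "\<forall>a\<in>A. \<forall>b\<in>A. a + b \<in> A" and "Gcd A = 1" and "0 \<notin> A"
  shows "eventually (\<lambda>n. n \<in> A) sequentially"
proof -
  obtain b where "b \<in> A" "Suc b \<in> A" using add_closed_Gcd_1_consecutive assms by blast
  moreover have "0 < b" using \<open>b \<in> A\<close> \<open>0 \<notin> A\<close> by (metis gr0I)
  ultimately show ?thesis
    unfolding eventually_sequentially using add_closed_consecutive_ge[OF assms(1)] by blast
qed

section \<open>Convergence of ergodic chains\<close>

lemma Ppow_diag_eventually_pos:
  assumes "stochastic_matrix Q" and "aperiodic_chain Q"
  shows "eventually (\<lambda>n. 0 < Ppow Q n s s) sequentially"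
proof -
  let ?A = "{n. 0 < n \<and> 0 < Ppow Q n s s}"
  have "a + b \<in> ?A" if "a \<in> ?A" "b \<in> ?A" for a b
  proof -
    from that have "0 < Ppow Q a s s * Ppow Q b s s" by simp
    also have "\<dots> \<le> Ppow Q (a + b) s s" by (rule Ppow_mult_le_Ppow_add[OF assms(1)])
    finally show ?thesis using that by simp
  qed
  moreover have "Gcd ?A = 1" using assms(2) by (simp add: aperiodic_chain_def)
  ultimately have "eventually (\<lambda>n. n \<in> ?A) sequentially"
    by (intro add_closed_Gcd_1_eventually_mem) simp_all
  then show ?thesis by (rule eventually_mono) simp
qed

lemma Ppow_eventually_pos:
  assumes "stochastic_matrix Q" and "ergodic_chain Q"
  shows "eventually (\<lambda>n. \<forall>s s'. 0 < Ppow Q n s s') sequentially"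
proof (intro eventually_all_finite)
  fix s s'
  obtain k where k: "0 < Ppow Q k s s'"
    using assms(2) by (auto simp: ergodic_chain_def irreducible_chain_def)
  have "eventually (\<lambda>n. 0 < Ppow Q n s s) sequentially"
    using assms by (simp add: ergodic_chain_def Ppow_diag_eventually_pos)
  then have "eventually (\<lambda>n. 0 < Ppow Q (n + k) s s') sequentially"
  proof (rule eventually_mono)
    fix n assume "0 < Ppow Q n s s"
    with k have "0 < Ppow Q n s s * Ppow Q k s s'" by simp
    also have "\<dots> \<le> Ppow Q (n + k) s s'" by (rule Ppow_mult_le_Ppow_add[OF assms(1)])
    finally show "0 < Ppow Q (n + k) s s'" .
  qed
  then show "eventually (\<lambda>n. 0 < Ppow Q n s s') sequentially"
    using eventually_sequentially_seg[of "\<lambda>n. 0 < Ppow Q n s s'" k] by simp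
qed

lemma stationary_dist_vmult:
  assumes "stationary_dist Q d"
  shows "vmult d Q = d"
proof
  fix s
  from assms have "d s = vmult d Q s" unfolding stationary_dist_def vmult_def by blast
  then show "vmult d Q s = d s" by (rule sym)
qed

lemma stationary_dist_vmult_Ppow: "stationary_dist Q d \<Longrightarrow> vmult d (Ppow Q n) = d"
  using vmult_iterate_Ppow[of "\<lambda>_. d" Q 0 n] by (simp add: stationary_dist_vmult)

lemma stationary_dist_pos:
  assumes "stochastic_matrix Q" and "irreducible_chain Q" and "stationary_dist Q d"
  shows "0 < d s"
proof -
  have nonneg: "\<And>s. 0 \<le> d s" and "(\<Sum>s\<in>UNIV. d s) = 1"
    using assms(3) unfolding stationary_dist_def by blast+
  then obtain s0 where "d s0 \<noteq> 0" by force
  with nonneg have "0 < d s0" by (simp add: less_le)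
  moreover obtain n where "0 < Ppow Q n s0 s"
    using assms(2) by (auto simp: irreducible_chain_def)
  ultimately have "0 < d s0 * Ppow Q n s0 s" by simp
  also have "\<dots> \<le> vmult d (Ppow Q n) s" unfolding vmult_def
    by (rule member_le_sum) (simp_all add: nonneg Ppow_nonneg assms(1))
  also have "\<dots> = d s" by (simp add: stationary_dist_vmult_Ppow assms(3))
  finally show ?thesis .
qed

lemma decseq_tendsto_0_if_contracting:
  fixes a :: "nat \<Rightarrow> real"
  assumes "decseq a" and "\<And>t. 0 \<le> a t" and "\<And>t. a (t + N) \<le> \<rho> * a t" and "\<rho> < 1"
  shows "a \<longlonglongrightarrow> 0"
proof -
  obtain L where L: "a \<longlonglongrightarrow> L"
    using decseq_convergent[OF assms(1), of 0] assms(2) by blast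
  have "0 \<le> L" using L assms(2) by (intro LIMSEQ_le_const) auto
  have "(\<lambda>t. a (t + N)) \<longlonglongrightarrow> L" using L by (rule LIMSEQ_ignore_initial_segment)
  with L have "L \<le> \<rho> * L"
    using assms(3) by (intro LIMSEQ_le[of "\<lambda>t. a (t + N)" _ "\<lambda>t. \<rho> * a t"] tendsto_mult_left) auto
  then have "(1 - \<rho>) * L \<le> 0" by (simp add: algebra_simps)
  with \<open>0 \<le> L\<close> \<open>\<rho> < 1\<close> have "L = 0" by (simp add: mult_le_0_iff)
  with L show ?thesis by simp
qed

lemma vmult_iterate_tendsto_stationary:
  fixes p :: "nat \<Rightarrow> 's::finite \<Rightarrow> real"
  assumes Q: "stochastic_matrix Q" "ergodic_chain Q" and d: "stationary_dist Q d"
    and step: "\<And>t. p (Suc t) = vmult (p t) Q" and mass: "(\<Sum>s\<in>UNIV. p 0 s) = 1"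
  shows "(\<lambda>t. p t s) \<longlonglongrightarrow> d s"
proof -
  obtain N where "\<forall>n\<ge>N. \<forall>s s'. 0 < Ppow Q n s s'"
    using Ppow_eventually_pos[OF Q] unfolding eventually_sequentially by blast
  then have N: "0 < Ppow Q N s s'" for s s' by simp
  define \<delta> where "\<delta> = Min (range (\<lambda>(s, s'). Ppow Q N s s'))"
  have "0 < \<delta>" unfolding \<delta>_def using N by (subst Min_gr_iff) auto
  have minor: "\<delta> \<le> Ppow Q N s s'" for s s' unfolding \<delta>_def by (rule Min_le) auto
  define \<rho> where "\<rho> = 1 - real (card (UNIV :: 's set)) * \<delta>"
  define a where "a t = l1norm (\<lambda>s. p t s - d s)" for t
  have mass0: "(\<Sum>s\<in>UNIV. p t s - d s) = 0" for t
  proof -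
    have "(\<Sum>s\<in>UNIV. p t s) = 1"
      by (induction t) (simp_all add: mass step sum_vmult_stochastic Q(1))
    moreover have "(\<Sum>s\<in>UNIV. d s) = 1" using d unfolding stationary_dist_def by blast
    ultimately show ?thesis by (simp add: sum_subtractf)
  qed
  have "decseq a"
  proof (rule decseq_SucI)
    fix t
    have "a (Suc t) = l1norm (vmult (\<lambda>s. p t s - d s) Q)"
      by (simp add: a_def step vmult_diff stationary_dist_vmult[OF d])
    also have "\<dots> \<le> a t" unfolding a_def by (rule l1norm_vmult_le[OF Q(1)])
    finally show "a (Suc t) \<le> a t" .
  qed
  moreover have "a (t + N) \<le> \<rho> * a t" for t
  proof -
    have "a (t + N) = l1norm (vmult (\<lambda>s. p t s - d s) (Ppow Q N))"
      using vmult_iterate_Ppow[of p Q t N, OF step] stationary_dist_vmult_Ppow[OF d, of N]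
      by (simp add: a_def vmult_diff)
    also have "\<dots> \<le> \<rho> * a t" unfolding a_def \<rho>_def
      using minor stochastic_matrix_Ppow[OF Q(1)] mass0
      by (intro l1norm_vmult_le_Doeblin) (auto simp: stochastic_matrix_def)
    finally show ?thesis .
  qed
  moreover have "\<rho> < 1" unfolding \<rho>_def using \<open>0 < \<delta>\<close> by (simp add: card_gt_0_iff)
  ultimately have "a \<longlonglongrightarrow> 0"
    by (intro decseq_tendsto_0_if_contracting) (simp_all add: a_def l1norm_nonneg)
  from tendsto_l1norm_0D[OF this[unfolded a_def]] show ?thesis by (rule LIM_zero_cancel)
qed

section \<open>Sup-norm contractions\<close>

lemma abs_le_supnorm: "\<bar>v s\<bar> \<le> supnorm v"
  unfolding supnorm_def by (rule Max_ge) auto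

lemma supnorm_leI: "(\<And>s. \<bar>v s\<bar> \<le> B) \<Longrightarrow> supnorm v \<le> B"
  unfolding supnorm_def by auto

lemma supnorm_nonneg: "0 \<le> supnorm v"
  using abs_le_supnorm[of v] abs_ge_zero order.trans by blast

lemma supnorm_le_l1norm: "supnorm v \<le> l1norm v"
  by (rule supnorm_leI) (rule abs_le_l1norm)

lemma tendsto_supnorm_0:
  assumes "\<And>s. (\<lambda>n. f n s) \<longlonglongrightarrow> 0"
  shows "(\<lambda>n. supnorm (f n)) \<longlonglongrightarrow> 0"
proof (rule tendsto_0_le[where K = 1])
  show "(\<lambda>n. l1norm (f n)) \<longlonglongrightarrow> 0" using assms by (rule tendsto_l1norm_0I)
  show "eventually (\<lambda>n. norm (supnorm (f n)) \<le> norm (l1norm (f n)) * 1) sequentially"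
    by (simp add: supnorm_nonneg l1norm_nonneg supnorm_le_l1norm)
qed

lemma supnorm_stochastic_mult_le:
  assumes "stochastic_matrix B"
  shows "supnorm (\<lambda>s. \<Sum>s'\<in>UNIV. B s s' * v s') \<le> supnorm v"
proof (rule supnorm_leI)
  fix s
  have "\<bar>\<Sum>s'\<in>UNIV. B s s' * v s'\<bar> \<le> (\<Sum>s'\<in>UNIV. B s s' * supnorm v)"
    using assms unfolding stochastic_matrix_def
    by (intro order.trans[OF sum_abs] sum_mono) (simp add: abs_mult mult_left_mono abs_le_supnorm)
  also have "\<dots> = supnorm v"
    using assms by (simp add: stochastic_matrix_def flip: sum_distrib_right)
  finally show "\<bar>\<Sum>s'\<in>UNIV. B s s' * v s'\<bar> \<le> supnorm v" .
qed

lemma supnorm_contraction_funpow: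
  fixes T :: "('s::finite \<Rightarrow> real) \<Rightarrow> 's \<Rightarrow> real"
  assumes contr: "\<And>v w. supnorm (\<lambda>s. T v s - T w s) \<le> c * supnorm (\<lambda>s. v s - w s)" and "0 \<le> c"
  shows "supnorm (\<lambda>s. (T ^^ n) v s - (T ^^ n) w s) \<le> c ^ n * supnorm (\<lambda>s. v s - w s)"
proof (induction n)
  case (Suc n)
  have "supnorm (\<lambda>s. (T ^^ Suc n) v s - (T ^^ Suc n) w s)
      \<le> c * supnorm (\<lambda>s. (T ^^ n) v s - (T ^^ n) w s)"
    using contr by simp
  also have "\<dots> \<le> c ^ Suc n * supnorm (\<lambda>s. v s - w s)"
    using mult_left_mono[OF Suc.IH \<open>0 \<le> c\<close>] by (simp add: mult.assoc)
  finally show ?case .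
qed simp

lemma supnorm_contraction_funpow_convergent:
  fixes T :: "('s::finite \<Rightarrow> real) \<Rightarrow> 's \<Rightarrow> real"
  assumes contr: "\<And>v w. supnorm (\<lambda>s. T v s - T w s) \<le> c * supnorm (\<lambda>s. v s - w s)"
    and "0 \<le> c" and "c < 1"
  shows "\<exists>v_lim. \<forall>v s. (\<lambda>n. (T ^^ n) v s) \<longlonglongrightarrow> v_lim s"
proof -
  note funpow = supnorm_contraction_funpow[OF contr \<open>0 \<le> c\<close>]
  define z where "z n = (T ^^ n) (\<lambda>_. 0)" for n
  define C where "C = supnorm (\<lambda>s. T (\<lambda>_. 0) s - 0)"
  have "summable (\<lambda>n. z (Suc n) s - z n s)" for s
  proof (rule summable_comparison_test)
    have "\<bar>z (Suc n) s - z n s\<bar> \<le> c ^ n * C" for n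
      using order.trans[OF abs_le_supnorm funpow[of n "T (\<lambda>_. 0)" "\<lambda>_. 0"]]
      by (simp add: z_def C_def funpow_Suc_right del: funpow.simps)
    then show "\<exists>N. \<forall>n\<ge>N. norm (z (Suc n) s - z n s) \<le> c ^ n * C" by auto
    show "summable (\<lambda>n. c ^ n * C)"
      using assms(2,3) by (intro summable_mult2 summable_geometric) simp
  qed
  moreover have "z 0 = (\<lambda>_. 0)" by (simp add: z_def)
  ultimately have z_lim: "(\<lambda>n. z n s) \<longlonglongrightarrow> (\<Sum>n. z (Suc n) s - z n s)" for s
    using summable_LIMSEQ[of "\<lambda>n. z (Suc n) s - z n s"]
    by (simp add: sum_lessThan_telescope[of "\<lambda>i. z i s"])
  have "(\<lambda>n. (T ^^ n) v s) \<longlonglongrightarrow> (\<Sum>n. z (Suc n) s - z n s)" for v s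
  proof -
    have "(\<lambda>n. (T ^^ n) v s - z n s) \<longlonglongrightarrow> 0"
    proof (rule tendsto_0_le[where K = 1])
      show "(\<lambda>n. c ^ n * supnorm v) \<longlonglongrightarrow> 0"
        using tendsto_mult_right[OF LIMSEQ_power_zero[of c]] assms(2,3) by simp
      have "\<bar>(T ^^ n) v s - z n s\<bar> \<le> c ^ n * supnorm (\<lambda>s. v s - 0)" for n
        unfolding z_def by (rule order.trans[OF abs_le_supnorm funpow])
      then show "eventually (\<lambda>n. norm ((T ^^ n) v s - z n s) \<le> norm (c ^ n * supnorm v) * 1)
          sequentially"
        using \<open>0 \<le> c\<close> by (simp add: abs_mult supnorm_nonneg)
    qed
    from tendsto_add[OF this z_lim[of s]] show ?thesis by simp
  qed
  then show ?thesis by (intro exI[of _ "\<lambda>s. \<Sum>n. z (Suc n) s - z n s"]) simp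
qed

lemma supnorm_contraction_limit_fixpoint:
  fixes T :: "('s::finite \<Rightarrow> real) \<Rightarrow> 's \<Rightarrow> real"
  assumes contr: "\<And>v w. supnorm (\<lambda>s. T v s - T w s) \<le> c * supnorm (\<lambda>s. v s - w s)"
    and lim: "\<And>s. (\<lambda>n. (T ^^ n) v s) \<longlonglongrightarrow> v_lim s"
  shows "T v_lim = v_lim"
proof
  fix s
  have "(\<lambda>n. supnorm (\<lambda>s. (T ^^ n) v s - v_lim s)) \<longlonglongrightarrow> 0"
    using lim by (intro tendsto_supnorm_0) (rule LIM_zero)
  then have "(\<lambda>n. T ((T ^^ n) v) s - T v_lim s) \<longlonglongrightarrow> 0"
  proof (rule tendsto_0_le[where K = c])
    have "\<bar>T ((T ^^ n) v) s - T v_lim s\<bar> \<le> supnorm (\<lambda>s. (T ^^ n) v s - v_lim s) * c" for n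
      using order.trans[OF abs_le_supnorm contr] by (simp add: mult.commute)
    then show "eventually (\<lambda>n. norm (T ((T ^^ n) v) s - T v_lim s)
        \<le> norm (supnorm (\<lambda>s. (T ^^ n) v s - v_lim s)) * c) sequentially"
      by (simp add: supnorm_nonneg)
  qed
  then have "(\<lambda>n. (T ^^ Suc n) v s) \<longlonglongrightarrow> T v_lim s" by (simp add: LIM_zero_cancel)
  moreover have "(\<lambda>n. (T ^^ Suc n) v s) \<longlonglongrightarrow> v_lim s" using lim by (rule LIMSEQ_Suc)
  ultimately show "T v_lim s = v_lim s" by (rule LIMSEQ_unique)
qed

lemma supnorm_contraction_fixpoint:
  fixes T :: "('s::finite \<Rightarrow> real) \<Rightarrow> 's \<Rightarrow> real"
  assumes contr: "\<And>v w. supnorm (\<lambda>s. T v s - T w s) \<le> c * supnorm (\<lambda>s. v s - w s)"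
    and "0 \<le> c" and "c < 1"
  shows "\<exists>v_fix. T v_fix = v_fix \<and> (\<forall>v s. (\<lambda>n. (T ^^ n) v s) \<longlonglongrightarrow> v_fix s)"
  using supnorm_contraction_funpow_convergent[OF assms] supnorm_contraction_limit_fixpoint[OF contr]
  by blast

section \<open>Affine iterations driven by a convergent input\<close>

lemma tendsto_0_if_le_mult_add:
  fixes a e :: "nat \<Rightarrow> real"
  assumes nonneg: "\<And>n. 0 \<le> a n" and rec: "\<And>n. a (Suc n) \<le> x * a n + e n"
    and "e \<longlonglongrightarrow> 0" and "0 \<le> x" and "x < 1"
  shows "a \<longlonglongrightarrow> 0"
proof (rule LIMSEQ_I)
  fix r :: real
  assume "0 < r"
  then obtain N where N: "\<And>n. N \<le> n \<Longrightarrow> e n \<le> r * (1 - x) / 2"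
    using LIMSEQ_D[OF \<open>e \<longlonglongrightarrow> 0\<close>, of "r * (1 - x) / 2"] \<open>x < 1\<close> by fastforce
  \<comment> \<open>\<open>r / 2\<close> is a fixed point of \<open>y \<mapsto> x * y + r * (1 - x) / 2\<close>\<close>
  have bound: "a (N + k) \<le> x ^ k * a N + r / 2" for k
  proof (induction k)
    case (Suc k)
    have "a (N + Suc k) \<le> x * (x ^ k * a N + r / 2) + r * (1 - x) / 2"
      using rec[of "N + k"] N[of "N + k"] mult_left_mono[OF Suc \<open>0 \<le> x\<close>] by simp
    also have "\<dots> = x ^ Suc k * a N + r / 2" by (simp add: field_simps)
    finally show ?case .
  qed (simp add: \<open>0 < r\<close> less_imp_le)
  obtain K where K: "\<And>k. K \<le> k \<Longrightarrow> x ^ k * a N < r / 2"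
    using LIMSEQ_D[OF tendsto_mult_right[OF LIMSEQ_power_zero, of x "a N"], of "r / 2"]
      \<open>0 < r\<close> \<open>0 \<le> x\<close> \<open>x < 1\<close> nonneg[of N] by fastforce
  have "\<bar>a n\<bar> < r" if "N + K \<le> n" for n
  proof -
    have "a n \<le> x ^ (n - N) * a N + r / 2" using bound[of "n - N"] that by simp
    moreover have "x ^ (n - N) * a N < r / 2" using K that by simp
    ultimately show ?thesis using nonneg[of n] by simp
  qed
  then show "\<exists>n0. \<forall>n\<ge>n0. norm (a n - 0) < r" by auto
qed

lemma vmult_affine_iteration_tendsto:
  assumes Q: "stochastic_matrix Q" and "0 \<le> x" "x < 1"
    and step: "\<And>t. u (Suc t) = (\<lambda>s. x * w t s + x * vmult (u t) Q s)"
    and w_lim: "\<And>s. (\<lambda>t. w t s) \<longlonglongrightarrow> w_lim s"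
    and fixed: "u_lim = (\<lambda>s. x * w_lim s + x * vmult u_lim Q s)"
  shows "(\<lambda>t. u t s) \<longlonglongrightarrow> u_lim s"
proof -
  define A where "A t = l1norm (\<lambda>s. u t s - u_lim s)" for t
  define e where "e t = x * l1norm (\<lambda>s. w t s - w_lim s)" for t
  have tri: "\<bar>x * a + x * b\<bar> \<le> x * \<bar>a\<bar> + x * \<bar>b\<bar>" for a b
    using abs_triangle_ineq[of "x * a" "x * b"] \<open>0 \<le> x\<close> by (simp add: abs_mult)
  have A_step: "A (Suc t) \<le> x * A t + e t" for t
  proof -
    have "u (Suc t) s - u_lim s = x * (w t s - w_lim s) + x * vmult (\<lambda>s. u t s - u_lim s) Q s" for s
    proof -
      have "u_lim s = x * w_lim s + x * vmult u_lim Q s" using fun_cong[OF fixed, of s] by simp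
      then show ?thesis by (simp add: step vmult_diff algebra_simps)
    qed
    then have "A (Suc t) = l1norm (\<lambda>s. x * (w t s - w_lim s) + x * vmult (\<lambda>s. u t s - u_lim s) Q s)"
      by (simp add: A_def)
    also have "\<dots> \<le> x * l1norm (\<lambda>s. w t s - w_lim s) + x * l1norm (vmult (\<lambda>s. u t s - u_lim s) Q)"
      unfolding l1norm_def sum_distrib_left sum.distrib[symmetric] by (intro sum_mono tri)
    also have "\<dots> \<le> x * l1norm (\<lambda>s. w t s - w_lim s) + x * A t"
      unfolding A_def using \<open>0 \<le> x\<close> by (intro add_left_mono mult_left_mono l1norm_vmult_le Q)
    finally show ?thesis by (simp add: e_def)
  qed
  have e_lim: "e \<longlonglongrightarrow> 0"
    unfolding e_def using w_lim by (intro tendsto_mult_right_zero tendsto_l1norm_0I LIM_zero)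
  have "A \<longlonglongrightarrow> 0"
    by (rule tendsto_0_if_le_mult_add[where a = A, OF _ A_step e_lim \<open>0 \<le> x\<close> \<open>x < 1\<close>])
      (simp add: A_def l1norm_nonneg)
  from tendsto_l1norm_0D[OF this[unfolded A_def]] show ?thesis by (rule LIM_zero_cancel)
qed

section \<open>The backward value function\<close>

lemma stochastic_matrix_Pfwd:
  assumes "is_mdp P d0" and "is_policy pol"
  shows "stochastic_matrix (Pfwd P pol)"
proof -
  have "(\<Sum>s'\<in>UNIV. Pfwd P pol s s') = (\<Sum>a\<in>UNIV. pol s a * (\<Sum>s'\<in>UNIV. P s a s'))" for s
    unfolding Pfwd_def by (simp add: sum_distrib_left) (rule sum.swap)
  with assms show ?thesis
    by (auto simp: stochastic_matrix_def is_mdp_def is_policy_def Pfwd_def intro!: sum_nonneg)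
qed

lemma state_prob_Suc:
  "state_prob P pol d0 (Suc t) = vmult (state_prob P pol d0 t) (Pfwd P pol)"
  unfolding state_prob_def vmult_def
  by (intro ext) (simp add: sum_distrib_left sum_distrib_right mult.assoc, rule sum.swap)

lemma state_prob_tendsto_stationary:
  assumes "is_mdp P d0" and "is_policy pol"
    and "ergodic_chain (Pfwd P pol)" and "stationary_dist (Pfwd P pol) d"
  shows "(\<lambda>t. state_prob P pol d0 t s) \<longlonglongrightarrow> d s"
proof (rule vmult_iterate_tendsto_stationary[where p = "state_prob P pol d0",
      OF _ assms(3,4) state_prob_Suc])
  show "stochastic_matrix (Pfwd P pol)" using assms(1,2) by (rule stochastic_matrix_Pfwd)
  show "(\<Sum>s\<in>UNIV. state_prob P pol d0 0 s) = 1"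
    using assms(1) by (simp add: state_prob_def is_mdp_def if_distrib cong: if_cong)
qed

text \<open>Expected reward collected on the step into state \<open>s''\<close>, jointly with entering \<open>s''\<close>,
  when the current state has distribution \<open>p\<close>.\<close>
definition entry_reward :: "('s::finite \<Rightarrow> 'a::finite \<Rightarrow> 's \<Rightarrow> real) \<Rightarrow> ('s \<Rightarrow> 'a \<Rightarrow> real)
    \<Rightarrow> ('s \<Rightarrow> 'a \<Rightarrow> real) \<Rightarrow> ('s \<Rightarrow> real) \<Rightarrow> 's \<Rightarrow> real" where
  "entry_reward P pol R p s'' = (\<Sum>s'\<in>UNIV. \<Sum>a\<in>UNIV. p s' * pol s' a * R s' a * P s' a s'')"

lemma reward_joint_eq:
  "reward_joint P pol d0 R j k =
     vmult (entry_reward P pol R (state_prob P pol d0 j)) (Ppow (Pfwd P pol) k)"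
proof
  fix s
  have "reward_joint P pol d0 R j k s = (\<Sum>s'\<in>UNIV. \<Sum>s''\<in>UNIV. \<Sum>a\<in>UNIV.
      state_prob P pol d0 j s' * pol s' a * R s' a * P s' a s'' * Ppow (Pfwd P pol) k s'' s)"
    unfolding reward_joint_def by (rule sum.cong[OF refl]) (rule sum.swap)
  also have "\<dots> = (\<Sum>s''\<in>UNIV. \<Sum>s'\<in>UNIV. \<Sum>a\<in>UNIV.
      state_prob P pol d0 j s' * pol s' a * R s' a * P s' a s'' * Ppow (Pfwd P pol) k s'' s)"
    by (rule sum.swap)
  finally show "reward_joint P pol d0 R j k s =
      vmult (entry_reward P pol R (state_prob P pol d0 j)) (Ppow (Pfwd P pol) k) s"
    by (simp add: vmult_def entry_reward_def sum_distrib_right)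
qed

lemma rback_eq: "rback P pol d R s = entry_reward P pol R d s / d s"
  unfolding rback_def entry_reward_def by (simp add: mult_ac)

definition back_return_joint :: "('s::finite \<Rightarrow> 'a::finite \<Rightarrow> 's \<Rightarrow> real) \<Rightarrow> ('s \<Rightarrow> 'a \<Rightarrow> real)
    \<Rightarrow> ('s \<Rightarrow> real) \<Rightarrow> ('s \<Rightarrow> 'a \<Rightarrow> real) \<Rightarrow> real \<Rightarrow> real \<Rightarrow> nat \<Rightarrow> 's \<Rightarrow> real" where
  "back_return_joint P pol d0 R \<gamma> lam t s =
     (\<Sum>i\<in>{1..t}. (lam * \<gamma>) ^ i * reward_joint P pol d0 R (t - i) (i - 1) s)"

lemma back_cond_return_eq:
  "back_cond_return P pol d0 R \<gamma> lam t s =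
     back_return_joint P pol d0 R \<gamma> lam t s / state_prob P pol d0 t s"
  unfolding back_cond_return_def back_return_joint_def ..

lemma back_return_joint_Suc:
  "back_return_joint P pol d0 R \<gamma> lam (Suc t) =
     (\<lambda>s. lam * \<gamma> * entry_reward P pol R (state_prob P pol d0 t) s
        + lam * \<gamma> * vmult (back_return_joint P pol d0 R \<gamma> lam t) (Pfwd P pol) s)"
proof
  fix s
  define x where "x = lam * \<gamma>"
  define r where
    "r j k = vmult (entry_reward P pol R (state_prob P pol d0 j)) (Ppow (Pfwd P pol) k)" for j k
  have r_Suc: "r j (Suc k) = vmult (r j k) (Pfwd P pol)" for j k
    unfolding r_def by (simp only: Ppow_Suc_vmult vmult_assoc)
  have "back_return_joint P pol d0 R \<gamma> lam (Suc t) s = (\<Sum>k<Suc t. x ^ Suc k * r (t - k) k s)"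
    by (simp add: back_return_joint_def sum.atLeast1_atMost_eq reward_joint_eq x_def r_def)
  also have "\<dots> = x * r t 0 s + (\<Sum>k<t. x ^ Suc (Suc k) * r (t - Suc k) (Suc k) s)"
    by (subst sum.lessThan_Suc_shift) simp
  also have "(\<Sum>k<t. x ^ Suc (Suc k) * r (t - Suc k) (Suc k) s)
      = x * vmult (\<lambda>s. \<Sum>k<t. x ^ Suc k * r (t - Suc k) k s) (Pfwd P pol) s"
    unfolding r_Suc vmult_def
    by (simp add: sum_distrib_left sum_distrib_right mult_ac, rule sum.swap)
  also have "(\<lambda>s. \<Sum>k<t. x ^ Suc k * r (t - Suc k) k s) = back_return_joint P pol d0 R \<gamma> lam t"
    by (simp add: fun_eq_iff back_return_joint_def sum.atLeast1_atMost_eq reward_joint_eq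
        x_def r_def)
  finally show "back_return_joint P pol d0 R \<gamma> lam (Suc t) s =
      lam * \<gamma> * entry_reward P pol R (state_prob P pol d0 t) s
        + lam * \<gamma> * vmult (back_return_joint P pol d0 R \<gamma> lam t) (Pfwd P pol) s"
    by (simp add: r_def x_def vmult_Ppow_0)
qed

lemma stochastic_matrix_Pback:
  assumes "stochastic_matrix (Pfwd P pol)" and "stationary_dist (Pfwd P pol) d" and "\<And>s. 0 < d s"
  shows "stochastic_matrix (Pback P pol d)"
proof -
  have "(\<Sum>s'\<in>UNIV. Pback P pol d s s') = vmult d (Pfwd P pol) s / d s" for s
    by (simp add: Pback_def vmult_def sum_divide_distrib)
  also have "\<dots> s = 1" for s
    using assms(3)[of s] by (simp add: stationary_dist_vmult[OF assms(2)])
  finally show ?thesis using assms(1,3)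
    by (auto simp: stochastic_matrix_def Pback_def less_imp_le)
qed

lemma Tback_contraction:
  assumes "stochastic_matrix (Pback P pol d)" and "0 \<le> lam * \<gamma>"
  shows "supnorm (\<lambda>s. Tback P pol d R \<gamma> lam v s - Tback P pol d R \<gamma> lam w s)
           \<le> lam * \<gamma> * supnorm (\<lambda>s. v s - w s)"
proof (rule supnorm_leI)
  fix s
  have "Tback P pol d R \<gamma> lam v s - Tback P pol d R \<gamma> lam w s
      = lam * \<gamma> * (\<Sum>s'\<in>UNIV. Pback P pol d s s' * (v s' - w s'))"
    by (simp add: Tback_def right_diff_distrib sum_subtractf)
  then have "\<bar>Tback P pol d R \<gamma> lam v s - Tback P pol d R \<gamma> lam w s\<bar>
      = lam * \<gamma> * \<bar>\<Sum>s'\<in>UNIV. Pback P pol d s s' * (v s' - w s')\<bar>"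
    by (simp only: abs_mult[of "lam * \<gamma>"] abs_of_nonneg[OF assms(2)])
  also have "\<dots> \<le> lam * \<gamma> * supnorm (\<lambda>s. v s - w s)"
    using order.trans[OF abs_le_supnorm supnorm_stochastic_mult_le[OF assms(1)]] assms(2)
    by (rule mult_left_mono)
  finally show "\<bar>Tback P pol d R \<gamma> lam v s - Tback P pol d R \<gamma> lam w s\<bar>
      \<le> lam * \<gamma> * supnorm (\<lambda>s. v s - w s)" .
qed

text \<open>Multiplying a fixed point of the backward operator by \<open>d\<close> turns the backward kernel into
  the forward one.\<close>
lemma Tback_fixpoint_weighted:
  assumes "\<And>s. d s \<noteq> 0" and "Tback P pol d R \<gamma> lam v = v"
  shows "(\<lambda>s. d s * v s) =
    (\<lambda>s. lam * \<gamma> * entry_reward P pol R d s + lam * \<gamma> * vmult (\<lambda>s. d s * v s) (Pfwd P pol) s)"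
proof
  fix s
  have "d s * v s = d s * Tback P pol d R \<gamma> lam v s" using assms(2) by simp
  also have "\<dots> = lam * \<gamma> * entry_reward P pol R d s
      + lam * \<gamma> * vmult (\<lambda>s. d s * v s) (Pfwd P pol) s"
    using assms(1)[of s]
    by (simp add: Tback_def rback_eq Pback_def vmult_def sum_distrib_left field_simps)
  finally show "d s * v s = lam * \<gamma> * entry_reward P pol R d s
      + lam * \<gamma> * vmult (\<lambda>s. d s * v s) (Pfwd P pol) s" .
qed

lemma entry_reward_tendsto:
  "(\<And>s. (\<lambda>t. p t s) \<longlonglongrightarrow> q s) \<Longrightarrow> (\<lambda>t. entry_reward P pol R (p t) s) \<longlonglongrightarrow> entry_reward P pol R q s"
  unfolding entry_reward_def by (intro tendsto_intros)

theorem theorem4p3: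
  fixes P :: "'s::finite \<Rightarrow> 'a::finite \<Rightarrow> 's \<Rightarrow> real"
    and pol :: "'s \<Rightarrow> 'a \<Rightarrow> real"
    and R :: "'s \<Rightarrow> 'a \<Rightarrow> real"
    and d0 d :: "'s \<Rightarrow> real"
    and \<gamma> lam :: real
  assumes "is_mdp P d0" and "is_policy pol"
    and "0 \<le> \<gamma>" and "\<gamma> < 1" and "0 \<le> lam" and "lam \<le> 1"
    and "ergodic_chain (Pfwd P pol)"
    and "stationary_dist (Pfwd P pol) d"
  shows "\<exists>vb :: 's \<Rightarrow> real.
           (\<forall>s. (\<lambda>t. back_cond_return P pol d0 R \<gamma> lam t s) \<longlonglongrightarrow> vb s)
         \<and> (\<exists>c. 0 \<le> c \<and> c < 1 \<and>
              (\<forall>v w. supnorm (\<lambda>s. Tback P pol d R \<gamma> lam v s - Tback P pol d R \<gamma> lam w s)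
                       \<le> c * supnorm (\<lambda>s. v s - w s)))
         \<and> (\<forall>v0 s. (\<lambda>n. (Tback P pol d R \<gamma> lam ^^ n) v0 s) \<longlonglongrightarrow> vb s)"
proof -
  have x: "0 \<le> lam * \<gamma>" "lam * \<gamma> < 1"
    using assms(3-6) mult_right_mono[of lam 1 \<gamma>] by auto
  have Q: "stochastic_matrix (Pfwd P pol)" using assms(1,2) by (rule stochastic_matrix_Pfwd)
  have d_pos: "0 < d s" for s
    using stationary_dist_pos[OF Q _ assms(8)] assms(7) by (simp add: ergodic_chain_def)
  note contr = Tback_contraction[OF stochastic_matrix_Pback[OF Q assms(8) d_pos] x(1)]
  obtain v where fixed: "Tback P pol d R \<gamma> lam v = v"
    and iterates: "\<forall>v0 s. (\<lambda>n. (Tback P pol d R \<gamma> lam ^^ n) v0 s) \<longlonglongrightarrow> v s"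
    using supnorm_contraction_fixpoint[OF contr x] by blast
  have numerator: "(\<lambda>t. back_return_joint P pol d0 R \<gamma> lam t s) \<longlonglongrightarrow> d s * v s" for s
    using vmult_affine_iteration_tendsto[OF Q x back_return_joint_Suc
        entry_reward_tendsto[OF state_prob_tendsto_stationary[OF assms(1,2,7,8)]]
        Tback_fixpoint_weighted[OF _ fixed]] d_pos
    by (simp add: less_imp_neq[symmetric])
  have "(\<lambda>t. back_cond_return P pol d0 R \<gamma> lam t s) \<longlonglongrightarrow> v s" for s
  proof -
    have "(\<lambda>t. back_cond_return P pol d0 R \<gamma> lam t s) \<longlonglongrightarrow> d s * v s / d s"
      unfolding back_cond_return_eq using d_pos[of s] numerator
      by (intro tendsto_divide state_prob_tendsto_stationary assms(1,2,7,8)) auto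
    with d_pos[of s] show ?thesis by simp
  qed
  with contr iterates x show ?thesis by blast
qed

end
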